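(* Let $\alpha\in(0,1]$ and let $(X_1,\dots,X_n)$ be a random vector with joint survival function $$\Pr(X_1>x_1,\dots,X_n>x_n)=\exp\{-(x_1+\dots+x_n)^\alpha\},\qquad x_1,\dots,x_n\ge0,$$ i.e. Weibull($\alpha$) marginals $\Pr(X_i>x)=e^{-x^\alpha}$ with Gumbel survival copula $\bar C(u_1,\dots,u_n)=\exp\{-[\sum_{k=1}^n(-\log u_k)^{1/\alpha}]^\alpha\}$ (this is the mixture of exponentials model where, given $\Theta=\theta$, the $X_i$ are i.i.d. exponential with rate $\theta$, and $\Theta$ is positive stable with Laplace transform $e^{-s^\alpha}$). Then the pdf of $S_n=X_1+\dots+X_n$ is, for $x>0$, $$f_{S_n}(x)=\frac{x^{n-1}}{\Gamma(n)}\sum_{k=1}^n(-1)^{n+k}e^{-x^\alpha}B_{n,k}\Big((\alpha)_1x^{\alpha-1},(\alpha)_2x^{\alpha-2},\dots,(\alpha)_{n-k+1}x^{\alpha-(n-k+1)}\Big).$$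
   Context: $(\alpha)_j=\alpha(\alpha-1)\cdots(\alpha-j+1)$ is the falling factorial. The partial (incomplete exponential) Bell polynomials are $$B_{n,k}(x_1,\dots,x_{n-k+1})=\sum\frac{n!}{j_1!\cdots j_{n-k+1}!}\Big(\frac{x_1}{1!}\Big)^{j_1}\cdots\Big(\frac{x_{n-k+1}}{(n-k+1)!}\Big)^{j_{n-k+1}},$$ the sum taken over all sequences of non-negative integers $j_1,\dots,j_{n-k+1}$ with $\sum_i j_i=k$ and $\sum_i i\,j_i=n$. *)

theory Defs
  imports "HOL-Probability.Probability"
begin

definition falling_fact :: "real \<Rightarrow> nat \<Rightarrow> real" where
  "falling_fact a j = (\<Prod>i<j. a - real i)"

text \<open>Partial exponential Bell polynomial B_{n,k}(x_1,...,x_{n-k+1}); the arguments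
  are given as a function x, of which x 1, ..., x (n-k+1) are used.  The sum ranges
  over sequences j_1..j_{n-k+1} of naturals with sum j_i = k and sum i*j_i = n
  (entries are automatically bounded by k).\<close>
definition bell_partial :: "nat \<Rightarrow> nat \<Rightarrow> (nat \<Rightarrow> real) \<Rightarrow> real" where
  "bell_partial n k x =
     (\<Sum>j \<in> {j \<in> {1..n-k+1} \<rightarrow>\<^sub>E {..k}.
            (\<Sum>i=1..n-k+1. j i) = k \<and> (\<Sum>i=1..n-k+1. i * j i) = n}.
        fact n / (\<Prod>i=1..n-k+1. fact (j i)) * (\<Prod>i=1..n-k+1. (x i / fact i) ^ j i))"

end

(*
  Write D_n(y) = (-1)^n (d/dy)^n exp (-y^alpha). Integrating D_(k+1) over (c, oo) gives D_k(c), so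
  integrating 1{x > 0} D_n(x_1 + ... + x_n) coordinate by coordinate over an upper orthant recovers
  the survival function exp (-(x_1 + ... + x_n)^alpha); since upper orthants determine a finite
  measure on R^n, this is the joint density. It is a genuine density because D_n >= 0: by
  Faa di Bruno, D_n(y) = exp (-y^alpha) * sum_k (-1)^(n+k) B_(n,k)((alpha)_1, (alpha)_2, ...) y^(k alpha - n),
  and the recurrence for these Bell coefficients, read off from their generating function
  ((1+z)^alpha - 1)^k / k!, preserves the sign pattern when 0 < alpha <= 1. Finally, a density
  f(x_1 + ... + x_n) on the positive orthant pushes forward under summation to s^(n-1)/(n-1)! f(s),
  and homogeneity of B_(n,k) turns D_n into the stated formula.
*)

theory Submission
  imports Defs "HOL-Computational_Algebra.Formal_Power_Series"
begin

definition bell_index_set :: "nat \<Rightarrow> nat \<Rightarrow> nat \<Rightarrow> (nat \<Rightarrow> nat) set" where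
  "bell_index_set N n k =
     {j \<in> {1..N} \<rightarrow>\<^sub>E {..k}. (\<Sum>i=1..N. j i) = k \<and> (\<Sum>i=1..N. i * j i) = n}"

definition bell_monomial :: "nat \<Rightarrow> (nat \<Rightarrow> real) \<Rightarrow> (nat \<Rightarrow> nat) \<Rightarrow> real" where
  "bell_monomial N x j = (\<Prod>i=1..N. (x i / fact i) ^ j i / fact (j i))"

text \<open>\<open>bell_sum N n k x\<close> is \<open>B\<^sub>n\<^sub>,\<^sub>k(x) / n!\<close>, except that the index range \<open>{1..n-k+1}\<close> is
  replaced by an arbitrary \<open>{1..N}\<close>; it does not depend on \<open>N \<ge> n - k + 1\<close>.\<close>
definition bell_sum :: "nat \<Rightarrow> nat \<Rightarrow> nat \<Rightarrow> (nat \<Rightarrow> real) \<Rightarrow> real" where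
  "bell_sum N n k x = (\<Sum>j\<in>bell_index_set N n k. bell_monomial N x j)"

definition egf :: "(nat \<Rightarrow> real) \<Rightarrow> real fps" where
  "egf x = Abs_fps (\<lambda>i. if i = 0 then 0 else x i / fact i)"

lemma sum_fun_upd_add:
  fixes g :: "'a \<Rightarrow> 'b \<Rightarrow> 'c::comm_monoid_add"
  assumes "finite A" "i \<in> A"
  shows "(\<Sum>l\<in>A. g l ((j(i := v)) l)) + g i (j i) = (\<Sum>l\<in>A. g l (j l)) + g i v"
proof -
  have "(\<Sum>l\<in>A - {i}. g l ((j(i := v)) l)) = (\<Sum>l\<in>A - {i}. g l (j l))"
    by (intro sum.cong) auto
  then show ?thesis
    using sum.remove[OF assms, of "\<lambda>l. g l ((j(i := v)) l)"] sum.remove[OF assms, of "\<lambda>l. g l (j l)"]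
    by (simp add: ac_simps)
qed

lemma bell_index_set_iff:
  "j \<in> bell_index_set N n k \<longleftrightarrow>
     j \<in> extensional {1..N} \<and> (\<Sum>i=1..N. j i) = k \<and> (\<Sum>i=1..N. i * j i) = n"
proof -
  have "j i \<le> (\<Sum>i=1..N. j i)" if "i \<in> {1..N}" for i
    using that by (intro member_le_sum) auto
  then show ?thesis by (auto simp: bell_index_set_def PiE_iff)
qed

lemma finite_bell_index_set: "finite (bell_index_set N n k)"
  unfolding bell_index_set_def by (rule finite_subset[of _ "{1..N} \<rightarrow>\<^sub>E {..k}"]) (auto simp: finite_PiE)

lemma bell_sum_0: "bell_sum N n 0 x = (if n = 0 then 1 else 0)"
proof -
  have "bell_index_set N n 0 = (if n = 0 then {\<lambda>i\<in>{1..N}. 0} else {})"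
    by (auto simp: bell_index_set_iff extensional_def fun_eq_iff)
  then show ?thesis by (simp add: bell_sum_def bell_monomial_def)
qed

lemma bell_monomial_fun_upd:
  assumes "i \<in> {1..N}"
  shows "real (j i + 1) * bell_monomial N x (j(i := j i + 1)) = x i / fact i * bell_monomial N x j"
proof -
  define rest where "rest = (\<Prod>l\<in>{1..N} - {i}. (x l / fact l) ^ j l / fact (j l))"
  define y where "y = x i / fact i"
  have "bell_monomial N x (j(i := j i + 1)) = y ^ (j i + 1) / fact (j i + 1) * rest"
    unfolding bell_monomial_def rest_def y_def using assms
    by (subst prod.remove[of _ i]) (auto intro!: prod.cong)
  moreover have "bell_monomial N x j = y ^ j i / fact (j i) * rest"
    unfolding bell_monomial_def rest_def y_def using assms by (subst prod.remove[of _ i]) auto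
  moreover have "real (m + 1) * (y ^ (m + 1) / fact (m + 1)) = y * (y ^ m / fact m)" for m
    by (simp add: field_simps del: of_nat_Suc)
  ultimately show ?thesis
    unfolding y_def by (metis (no_types, lifting) mult.assoc)
qed

lemma bell_index_set_increment_image:
  assumes i: "i \<in> {1..N}" "i \<le> n"
  shows "(\<lambda>j. j(i := j i + 1)) ` bell_index_set N (n - i) k = {j \<in> bell_index_set N n (Suc k). j i \<noteq> 0}"
proof (intro set_eqI iffI)
  fix j assume "j \<in> (\<lambda>j. j(i := j i + 1)) ` bell_index_set N (n - i) k"
  then obtain j' where j': "j' \<in> bell_index_set N (n - i) k" and j: "j = j'(i := j' i + 1)" by auto
  have "(\<Sum>l=1..N. j l) + j' i = (\<Sum>l=1..N. j' l) + (j' i + 1)"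
    unfolding j by (rule sum_fun_upd_add[OF finite_atLeastAtMost i(1)])
  moreover have "(\<Sum>l=1..N. l * j l) + i * j' i = (\<Sum>l=1..N. l * j' l) + i * (j' i + 1)"
    unfolding j by (rule sum_fun_upd_add[OF finite_atLeastAtMost i(1)])
  ultimately show "j \<in> {j \<in> bell_index_set N n (Suc k). j i \<noteq> 0}"
    using j' i unfolding j by (auto simp: bell_index_set_iff extensional_def)
next
  fix j assume "j \<in> {j \<in> bell_index_set N n (Suc k). j i \<noteq> 0}"
  then have j: "j \<in> bell_index_set N n (Suc k)" "j i \<noteq> 0" by auto
  define j' where "j' = j(i := j i - 1)"
  have "(\<Sum>l=1..N. j' l) + j i = (\<Sum>l=1..N. j l) + (j i - 1)"
    unfolding j'_def by (rule sum_fun_upd_add[OF finite_atLeastAtMost i(1)])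
  moreover have "(\<Sum>l=1..N. l * j' l) + i * j i = (\<Sum>l=1..N. l * j l) + i * (j i - 1)"
    unfolding j'_def by (rule sum_fun_upd_add[OF finite_atLeastAtMost i(1)])
  moreover have "i * (j i - 1) + i = i * j i" using j(2) by (cases "j i") auto
  ultimately have "j' \<in> bell_index_set N (n - i) k"
    using j i unfolding j'_def by (auto simp: bell_index_set_iff extensional_def)
  moreover have "j = j'(i := j' i + 1)" using j(2) by (auto simp: j'_def)
  ultimately show "j \<in> (\<lambda>j. j(i := j i + 1)) ` bell_index_set N (n - i) k" by blast
qed

lemma bell_sum_Suc_component:
  assumes i: "i \<in> {1..N}" "i \<le> n"
  shows "(\<Sum>j\<in>bell_index_set N n (Suc k). real (j i) * bell_monomial N x j) = x i / fact i * bell_sum N (n - i) k x"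
proof -
  have inj: "inj_on (\<lambda>j. j(i := j i + 1)) (bell_index_set N (n - i) k)"
    by (rule inj_onI) (metis fun_upd_idem_iff fun_upd_upd add_right_cancel fun_upd_same)
  have "(\<Sum>j\<in>bell_index_set N n (Suc k). real (j i) * bell_monomial N x j)
      = (\<Sum>j\<in>{j\<in>bell_index_set N n (Suc k). j i \<noteq> 0}. real (j i) * bell_monomial N x j)"
    by (rule sum.mono_neutral_right) (auto simp: finite_bell_index_set)
  also have "\<dots> = (\<Sum>j\<in>(\<lambda>j. j(i := j i + 1)) ` bell_index_set N (n - i) k. real (j i) * bell_monomial N x j)"
    by (simp only: bell_index_set_increment_image[OF i])
  also have "\<dots> = (\<Sum>j\<in>bell_index_set N (n - i) k. real (j i + 1) * bell_monomial N x (j(i := j i + 1)))"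
    by (subst sum.reindex[OF inj]) simp
  also have "\<dots> = (\<Sum>j\<in>bell_index_set N (n - i) k. x i / fact i * bell_monomial N x j)"
    by (intro sum.cong refl bell_monomial_fun_upd i)
  finally show ?thesis by (simp add: bell_sum_def sum_distrib_left)
qed

lemma bell_sum_Suc:
  "real (Suc k) * bell_sum N n (Suc k) x = (\<Sum>i\<in>{1..min N n}. x i / fact i * bell_sum N (n - i) k x)"
proof -
  have vanish: "j i = 0" if "j \<in> bell_index_set N n (Suc k)" "i \<in> {1..N}" "n < i" for i j
  proof -
    have "i * j i \<le> (\<Sum>l=1..N. l * j l)" using that(2) by (intro member_le_sum) auto
    then show ?thesis using that by (cases "j i") (auto simp: bell_index_set_iff)
  qed
  have "real (Suc k) * bell_sum N n (Suc k) x =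
      (\<Sum>j\<in>bell_index_set N n (Suc k). (\<Sum>i=1..N. real (j i)) * bell_monomial N x j)"
    unfolding bell_sum_def sum_distrib_left
    by (intro sum.cong refl) (auto simp: bell_index_set_iff simp flip: of_nat_sum)
  also have "\<dots> = (\<Sum>i=1..N. \<Sum>j\<in>bell_index_set N n (Suc k). real (j i) * bell_monomial N x j)"
    by (simp add: sum_distrib_right sum.swap[of _ "bell_index_set N n (Suc k)"])
  also have "\<dots> = (\<Sum>i=1..min N n. \<Sum>j\<in>bell_index_set N n (Suc k). real (j i) * bell_monomial N x j)"
    by (rule sum.mono_neutral_right) (auto simp: vanish)
  also have "\<dots> = (\<Sum>i=1..min N n. x i / fact i * bell_sum N (n - i) k x)"
    by (intro sum.cong refl bell_sum_Suc_component) auto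
  finally show ?thesis .
qed

lemma bell_sum_eq_fps_nth_egf_power:
  "n \<le> N \<Longrightarrow> fact k * bell_sum N n k x = fps_nth (egf x ^ k) n"
proof (induction k arbitrary: n)
  case 0
  then show ?case by (simp add: bell_sum_0)
next
  case (Suc k)
  have "fact (Suc k) * bell_sum N n (Suc k) x = (\<Sum>i=1..n. x i / fact i * (fact k * bell_sum N (n - i) k x))"
    using bell_sum_Suc[of k N n x] Suc.prems
    by (simp add: min_absorb2 sum_distrib_left mult_ac)
  also have "\<dots> = (\<Sum>i=1..n. fps_nth (egf x) i * fps_nth (egf x ^ k) (n - i))"
    using Suc by (intro sum.cong refl) (auto simp: egf_def)
  also have "\<dots> = (\<Sum>i=0..n. fps_nth (egf x) i * fps_nth (egf x ^ k) (n - i))"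
    by (rule sum.mono_neutral_left) (auto simp: egf_def)
  also have "\<dots> = fps_nth (egf x ^ Suc k) n" by (simp add: fps_mult_nth)
  finally show ?case .
qed

lemma bell_index_set_vanish:
  assumes j: "j \<in> bell_index_set N n k" and i: "i \<in> {1..N}" "n - k + 1 < i"
  shows "j i = 0"
proof (rule ccontr)
  assume "j i \<noteq> 0"
  have "(\<Sum>l=1..N. l * j l) = (\<Sum>l=1..N. j l) + (\<Sum>l=1..N. (l - 1) * j l)"
    by (simp add: sum.distrib[symmetric] algebra_simps)
  moreover have "(i - 1) * j i \<le> (\<Sum>l=1..N. (l - 1) * j l)"
    using i(1) by (intro member_le_sum) auto
  ultimately have "k + (i - 1) * j i \<le> n" using j by (simp add: bell_index_set_iff)
  moreover have "(i - 1) * 1 \<le> (i - 1) * j i" using \<open>j i \<noteq> 0\<close> by (intro mult_le_mono2) simp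
  ultimately show False using i(2) by arith
qed

lemma bell_sum_index_independent:
  assumes "n - k + 1 \<le> M" "M \<le> N"
  shows "bell_sum N n k x = bell_sum M n k x"
proof -
  define extend where "extend j = (\<lambda>l. if l \<in> {1..N} - {1..M} then 0 else j l)" for j :: "nat \<Rightarrow> nat"
  have sum_eq: "(\<Sum>l=1..N. f l (j l)) = (\<Sum>l=1..M. f l (j l))"
    if "\<And>l. l \<in> {1..N} - {1..M} \<Longrightarrow> j l = 0" "\<And>l. f l 0 = 0" for f :: "nat \<Rightarrow> nat \<Rightarrow> nat" and j
    using that assms(2) by (intro sum.mono_neutral_right) auto
  have prod_eq: "(\<Prod>l=1..N. f l (j l)) = (\<Prod>l=1..M. f l (j l))"
    if "\<And>l. l \<in> {1..N} - {1..M} \<Longrightarrow> j l = 0" "\<And>l. f l 0 = 1" for f :: "nat \<Rightarrow> nat \<Rightarrow> real" and j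
    using that assms(2) by (intro prod.mono_neutral_right) auto
  have vanish: "j l = 0" if "j \<in> bell_index_set N n k" "l \<in> {1..N} - {1..M}" for j l
    using bell_index_set_vanish[OF that(1)] that(2) assms(1) by auto
  show ?thesis
    unfolding bell_sum_def
  proof (rule sum.reindex_bij_witness[where i = extend and j = "\<lambda>j. restrict j {1..M}"])
    fix j assume j: "j \<in> bell_index_set N n k"
    show "extend (restrict j {1..M}) = j"
      using j vanish[OF j] by (auto simp: extend_def bell_index_set_iff extensional_def fun_eq_iff)
    show "restrict j {1..M} \<in> bell_index_set M n k"
      using j sum_eq[OF vanish[OF j], where f = "\<lambda>l v. v"] sum_eq[OF vanish[OF j], where f = "\<lambda>l v. l * v"]
      by (auto simp: bell_index_set_iff)
    show "bell_monomial M x (restrict j {1..M}) = bell_monomial N x j"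
      using prod_eq[OF vanish[OF j], where f = "\<lambda>l v. (x l / fact l) ^ v / fact v"]
      by (simp add: bell_monomial_def)
  next
    fix j assume j: "j \<in> bell_index_set M n k"
    have zero: "extend j l = 0" if "l \<in> {1..N} - {1..M}" for l
      using that by (simp add: extend_def)
    show "restrict (extend j) {1..M} = j"
      using j by (auto simp: extend_def bell_index_set_iff extensional_def fun_eq_iff)
    show "extend j \<in> bell_index_set N n k"
      using j sum_eq[where j = "extend j" and f = "\<lambda>l v. v", OF zero]
        sum_eq[where j = "extend j" and f = "\<lambda>l v. l * v", OF zero] assms(2)
      by (auto simp: bell_index_set_iff extend_def extensional_def)
  qed
qed

lemma bell_partial_eq_fps_nth: "bell_partial n k x = fact n / fact k * fps_nth (egf x ^ k) n"
proof -
  have "bell_partial n k x = fact n * bell_sum (n - k + 1) n k x"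
    by (simp add: bell_partial_def bell_sum_def bell_index_set_def bell_monomial_def
        sum_distrib_left prod_dividef)
  also have "\<dots> = fact n * bell_sum (n + 1) n k x"
    using bell_sum_index_independent[of n k "n - k + 1" "n + 1"] by simp
  also have "\<dots> = fact n / fact k * fps_nth (egf x ^ k) n"
    using bell_sum_eq_fps_nth_egf_power[of n "n + 1" k x] by (simp add: field_simps)
  finally show ?thesis .
qed

lemma bell_partial_eq_0: "n < k \<Longrightarrow> bell_partial n k x = 0"
  by (simp add: bell_partial_eq_fps_nth startsby_zero_power_prefix egf_def)

lemma bell_partial_0_left: "bell_partial 0 k x = (if k = 0 then 1 else 0)"
  by (simp add: bell_partial_eq_fps_nth egf_def)

lemma egf_scale: "egf (\<lambda>j. c * r ^ j * x j) = fps_const c * (egf x oo (fps_const r * fps_X))"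
  by (simp add: egf_def fps_eq_iff)

lemma bell_partial_scale:
  "bell_partial n k (\<lambda>j. c * r ^ j * x j) = c ^ k * r ^ n * bell_partial n k x"
  by (simp add: bell_partial_eq_fps_nth egf_scale power_mult_distrib fps_compose_power)

lemma egf_falling_fact: "egf (falling_fact a) = fps_binomial a - 1"
  by (simp add: egf_def fps_eq_iff falling_fact_def gbinomial_prod_rev atLeast0LessThan)

lemma fps_binomial_ODE: "(1 + fps_X) * fps_deriv (fps_binomial a) = fps_const a * fps_binomial (a::real)"
  by (simp add: fps_binomial_deriv fps_divide_unit inverse_mult_eq_1')

lemma fps_binomial_minus_one_power_ODE:
  fixes a :: real
  defines "F \<equiv> fps_binomial a - 1"
  shows "(1 + fps_X) * fps_deriv (F ^ Suc m) = fps_const (a * real (Suc m)) * (F ^ Suc m + F ^ m)"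
proof -
  have "(1 + fps_X) * fps_deriv (F ^ Suc m) =
      fps_const (real (Suc m)) * F ^ m * ((1 + fps_X) * fps_deriv (fps_binomial a))"
    by (simp only: fps_deriv_power) (simp add: F_def algebra_simps)
  also have "\<dots> = fps_const (real (Suc m)) * F ^ m * (fps_const a * (F + 1))"
    by (simp only: fps_binomial_ODE) (simp add: F_def)
  also have "\<dots> = fps_const (a * real (Suc m)) * (F ^ Suc m + F ^ m)"
    by (simp only: fps_const_mult[symmetric] power_Suc algebra_simps mult_1_left)
  finally show ?thesis .
qed

lemma fps_nth_ODE:
  fixes P Q :: "real fps"
  assumes "(1 + fps_X) * fps_deriv P = fps_const c * (P + Q)"
  shows "real (Suc n) * fps_nth P (Suc n) + real n * fps_nth P n = c * (fps_nth P n + fps_nth Q n)"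
proof -
  have "fps_nth ((1 + fps_X) * fps_deriv P) n = fps_nth (fps_const c * (P + Q)) n"
    using assms by simp
  then show ?thesis by (cases n) (simp_all add: algebra_simps)
qed

lemma bell_partial_falling_fact_Suc:
  "bell_partial (Suc n) k (falling_fact a) =
     (real k * a - real n) * bell_partial n k (falling_fact a) +
     (if k = 0 then 0 else a * bell_partial n (k - 1) (falling_fact a))"
proof (cases k)
  case 0
  then show ?thesis by (simp add: bell_partial_eq_fps_nth)
next
  case (Suc m)
  define F where "F = fps_binomial a - 1"
  have "real (Suc n) * fps_nth (F ^ Suc m) (Suc n) + real n * fps_nth (F ^ Suc m) n =
      a * real (Suc m) * (fps_nth (F ^ Suc m) n + fps_nth (F ^ m) n)"
    unfolding F_def by (rule fps_nth_ODE[OF fps_binomial_minus_one_power_ODE])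
  then show ?thesis
    unfolding bell_partial_eq_fps_nth egf_falling_fact F_def[symmetric] Suc
    by (simp add: field_simps del: of_nat_Suc power_Suc) (metis distrib_left mult.left_commute)
qed

lemma bell_partial_falling_fact_sign:
  assumes "0 < a" "a \<le> 1"
  shows "0 \<le> (-1) ^ (n + k) * bell_partial n k (falling_fact a)"
proof (induction n arbitrary: k)
  case 0
  then show ?case by (simp add: bell_partial_0_left)
next
  case (Suc n)
  define s where "s k = (-1) ^ (n + k) * bell_partial n k (falling_fact a)" for k
  have "(-1) ^ (Suc n + k) * bell_partial (Suc n) k (falling_fact a) =
      (real n - real k * a) * s k + (if k = 0 then 0 else a * s (k - 1))"
    by (cases k) (simp_all add: s_def bell_partial_falling_fact_Suc algebra_simps)
  moreover have "0 \<le> (real n - real k * a) * s k"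
  proof (cases "k \<le> n")
    case True
    have "real k * a \<le> real k" using assms by (simp add: mult_left_le)
    then show ?thesis using True Suc.IH[of k] by (simp add: s_def)
  next
    case False
    then show ?thesis by (simp add: s_def bell_partial_eq_0)
  qed
  moreover have "0 \<le> (if k = 0 then 0 else a * s (k - 1))"
    using Suc.IH[of "k - 1"] assms by (cases k) (simp_all add: s_def)
  ultimately show ?case by linarith
qed

definition weibull_deriv_poly :: "real \<Rightarrow> nat \<Rightarrow> real \<Rightarrow> real" where
  "weibull_deriv_poly a n y =
     (\<Sum>k\<le>n. (-1) ^ (n + k) * bell_partial n k (falling_fact a) * y powr (real k * a - real n))"

text \<open>For \<open>y > 0\<close>, \<open>weibull_deriv a n y\<close> is \<open>(-1)\<^sup>n\<close> times the \<open>n\<close>-th derivative of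
  \<open>\<lambda>y. exp (- (y powr a))\<close>, written by Faa di Bruno's formula. The case split makes
  \<open>weibull_deriv a 0 0 = 1\<close>, which the sum would miss since \<open>0 powr 0 = 0\<close>.\<close>
definition weibull_deriv :: "real \<Rightarrow> nat \<Rightarrow> real \<Rightarrow> real" where
  "weibull_deriv a n y = exp (- (y powr a)) * (if n = 0 then 1 else weibull_deriv_poly a n y)"

lemma weibull_deriv_pos: "y > 0 \<Longrightarrow> weibull_deriv a n y = exp (- (y powr a)) * weibull_deriv_poly a n y"
  by (simp add: weibull_deriv_def weibull_deriv_poly_def bell_partial_0_left)

lemma sum_bell_partial_falling_fact_Suc:
  fixes t :: "nat \<Rightarrow> real"
  shows "(\<Sum>k\<le>Suc n. (-1) ^ (Suc n + k) * bell_partial (Suc n) k (falling_fact a) * t k) =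
     a * (\<Sum>k\<le>n. (-1) ^ (n + k) * bell_partial n k (falling_fact a) * t (Suc k))
     - (\<Sum>k\<le>n. (-1) ^ (n + k) * bell_partial n k (falling_fact a) * ((real k * a - real n) * t k))"
proof -
  let ?b = "\<lambda>n k. bell_partial n k (falling_fact a)"
  have "(\<Sum>k\<le>Suc n. (-1) ^ (Suc n + k) * ?b (Suc n) k * t k) =
      (\<Sum>k\<le>Suc n. (if k = 0 then 0 else (-1) ^ (n + (k - 1)) * a * ?b n (k - 1) * t k)
        - (-1) ^ (n + k) * ?b n k * ((real k * a - real n) * t k))"
  proof (rule sum.cong[OF refl])
    fix k
    show "(-1) ^ (Suc n + k) * ?b (Suc n) k * t k =
        (if k = 0 then 0 else (-1) ^ (n + (k - 1)) * a * ?b n (k - 1) * t k)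
        - (-1) ^ (n + k) * ?b n k * ((real k * a - real n) * t k)"
      by (cases k) (simp_all add: bell_partial_falling_fact_Suc algebra_simps)
  qed
  also have "\<dots> = (\<Sum>k\<le>Suc n. (if k = 0 then 0 else (-1) ^ (n + (k - 1)) * a * ?b n (k - 1) * t k))
      - (\<Sum>k\<le>Suc n. (-1) ^ (n + k) * ?b n k * ((real k * a - real n) * t k))"
    by (rule sum_subtractf)
  also have "(\<Sum>k\<le>Suc n. (if k = 0 then 0 else (-1) ^ (n + (k - 1)) * a * ?b n (k - 1) * t k))
      = a * (\<Sum>k\<le>n. (-1) ^ (n + k) * ?b n k * t (Suc k))"
    by (subst sum.atMost_Suc_shift) (simp add: sum_distrib_left algebra_simps)
  also have "(\<Sum>k\<le>Suc n. (-1) ^ (n + k) * ?b n k * ((real k * a - real n) * t k))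
      = (\<Sum>k\<le>n. (-1) ^ (n + k) * ?b n k * ((real k * a - real n) * t k))"
    by (simp add: bell_partial_eq_0)
  finally show ?thesis .
qed

lemma weibull_deriv_poly_has_real_derivative:
  assumes "y > 0"
  shows "(weibull_deriv_poly a n has_real_derivative
     (\<Sum>k\<le>n. (-1) ^ (n + k) * bell_partial n k (falling_fact a) *
        ((real k * a - real n) * y powr (real k * a - real n - 1)))) (at y)"
  unfolding weibull_deriv_poly_def using assms by (auto intro!: derivative_eq_intros sum.cong)

lemma weibull_deriv_has_real_derivative:
  assumes y: "y > 0"
  shows "(weibull_deriv a n has_real_derivative - weibull_deriv a (Suc n) y) (at y)"
proof -
  let ?s = "\<lambda>k. (-1) ^ (n + k) * bell_partial n k (falling_fact a)"
  define t where "t k = y powr (real k * a - real n - 1)" for k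
  have t_Suc: "y powr (a - 1) * y powr (real k * a - real n) = t (Suc k)" for k
    using y by (simp add: t_def flip: powr_add) (simp add: algebra_simps)
  have shift: "y powr (a - 1) * weibull_deriv_poly a n y = (\<Sum>k\<le>n. ?s k * t (Suc k))"
    by (simp add: weibull_deriv_poly_def sum_distrib_left flip: t_Suc) (simp add: algebra_simps)
  define D where "D = exp (- (y powr a)) * (- (a * y powr (a - 1))) * weibull_deriv_poly a n y +
    exp (- (y powr a)) * (\<Sum>k\<le>n. ?s k * ((real k * a - real n) * t k))"
  have "((\<lambda>y. exp (- (y powr a)) * weibull_deriv_poly a n y) has_real_derivative D) (at y)"
    unfolding D_def t_def using y by (auto intro!: derivative_eq_intros weibull_deriv_poly_has_real_derivative)
  also have "D = exp (- (y powr a)) *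
      ((\<Sum>k\<le>n. ?s k * ((real k * a - real n) * t k)) - a * (y powr (a - 1) * weibull_deriv_poly a n y))"
    by (simp add: D_def algebra_simps)
  also have "\<dots> = - weibull_deriv a (Suc n) y"
  proof -
    have poly_Suc: "weibull_deriv_poly a (Suc n) y =
        (\<Sum>k\<le>Suc n. (-1) ^ (Suc n + k) * bell_partial (Suc n) k (falling_fact a) * t k)"
      by (simp add: weibull_deriv_poly_def t_def algebra_simps)
    show ?thesis
      unfolding shift weibull_deriv_pos[OF y] poly_Suc sum_bell_partial_falling_fact_Suc
      by (simp add: right_diff_distrib)
  qed
  finally show ?thesis
    by (rule has_field_derivative_transform_within_open[where S = "{0<..}"])
      (use y in \<open>auto simp: weibull_deriv_pos\<close>)
qed

lemma weibull_deriv_nonneg: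
  assumes "0 < a" "a \<le> 1" "y > 0"
  shows "0 \<le> weibull_deriv a n y"
proof -
  have "0 \<le> weibull_deriv_poly a n y"
    unfolding weibull_deriv_poly_def
    by (intro sum_nonneg mult_nonneg_nonneg bell_partial_falling_fact_sign assms) auto
  then show ?thesis using assms by (simp add: weibull_deriv_pos)
qed

lemma borel_measurable_weibull_deriv[measurable]: "weibull_deriv a n \<in> borel_measurable borel"
  unfolding weibull_deriv_def weibull_deriv_poly_def by measurable

lemma filterlim_powr_at_top:
  assumes "a > 0"
  shows "filterlim (\<lambda>y::real. y powr a) at_top at_top"
proof -
  have "filterlim (\<lambda>y::real. exp (a * ln y)) at_top at_top"
    by (intro filterlim_compose[OF exp_at_top]
        filterlim_tendsto_pos_mult_at_top[OF tendsto_const assms ln_at_top])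
  moreover have "eventually (\<lambda>y. exp (a * ln y) = y powr a) at_top"
    using eventually_gt_at_top[of 0] by eventually_elim (simp add: powr_def)
  ultimately show ?thesis using filterlim_cong by fastforce
qed

lemma tendsto_exp_neg_powr_mult_powr:
  fixes a r :: real
  assumes "a > 0"
  shows "((\<lambda>y::real. exp (- (y powr a)) * y powr r) \<longlongrightarrow> 0) at_top"
proof -
  define m where "m = nat \<lceil>r / a\<rceil>"
  have "r / a \<le> real m" unfolding m_def by linarith
  then have rm: "r \<le> a * real m" using assms by (simp add: field_simps)
  have lower: "eventually (\<lambda>y. (\<lambda>_. 0) y \<le> exp (- (y powr a)) * y powr r) at_top"
    by simp
  have upper: "eventually (\<lambda>y. exp (- (y powr a)) * y powr r \<le> (y powr a) ^ m / exp (y powr a)) at_top"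
    using eventually_ge_at_top[of "1::real"]
  proof eventually_elim
    case (elim y)
    have "y powr r \<le> y powr (a * real m)" using elim rm by (intro powr_mono) auto
    also have "\<dots> = (y powr a) ^ m" using elim by (simp add: powr_powr[symmetric] powr_realpow)
    finally show ?case by (simp add: exp_minus field_simps)
  qed
  have "((\<lambda>y. (y powr a) ^ m / exp (y powr a)) \<longlongrightarrow> 0) at_top"
    by (rule filterlim_compose[OF tendsto_power_div_exp_0 filterlim_powr_at_top[OF assms]])
  then show ?thesis by (rule tendsto_sandwich[OF lower upper tendsto_const])
qed

lemma weibull_deriv_tendsto_0:
  assumes "a > 0"
  shows "(weibull_deriv a n \<longlongrightarrow> 0) at_top"
proof -
  let ?f = "\<lambda>y. \<Sum>k\<le>n. (-1) ^ (n + k) * bell_partial n k (falling_fact a) *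
      (exp (- (y powr a)) * y powr (real k * a - real n))"
  have "(?f \<longlongrightarrow> 0) at_top"
    by (intro tendsto_null_sum tendsto_mult_right_zero tendsto_exp_neg_powr_mult_powr assms)
  moreover have "eventually (\<lambda>y. ?f y = weibull_deriv a n y) at_top"
    using eventually_gt_at_top[of 0]
    by eventually_elim (simp add: weibull_deriv_pos weibull_deriv_poly_def sum_distrib_left algebra_simps)
  ultimately show ?thesis using tendsto_cong by fastforce
qed

lemma weibull_deriv_0_tendsto_1:
  assumes "a > 0"
  shows "(weibull_deriv a 0 \<longlongrightarrow> 1) (at_right 0)"
proof -
  have "((\<lambda>y::real. y powr a) \<longlongrightarrow> 0) (at_right 0)"
    by (rule tendsto_zero_powrI[of "\<lambda>y. y" _ "\<lambda>_. a" a])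
      (auto intro: tendsto_ident_at eventually_at_rightI[of _ 1] simp: assms)
  then have "((\<lambda>y::real. exp (- (y powr a))) \<longlongrightarrow> exp (- 0)) (at_right 0)"
    by (intro tendsto_intros)
  moreover have "weibull_deriv a 0 = (\<lambda>y. exp (- (y powr a)))"
    by (simp add: weibull_deriv_def fun_eq_iff)
  ultimately show ?thesis by simp
qed

lemma weibull_deriv_tendsto_at_right:
  assumes "0 < a" "0 \<le> c" "0 < c \<or> j = 0"
  shows "(weibull_deriv a j \<longlongrightarrow> weibull_deriv a j c) (at_right c)"
proof (cases "c > 0")
  case True
  have "isCont (weibull_deriv a j) c"
    by (rule DERIV_isCont[OF weibull_deriv_has_real_derivative[OF True]])
  then show ?thesis by (simp add: isCont_def tendsto_mono[OF at_within_le_at])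
next
  case False
  then have "c = 0" "j = 0" using assms by auto
  then show ?thesis using weibull_deriv_0_tendsto_1[OF assms(1)] assms(1) by (simp add: weibull_deriv_def)
qed

lemma nn_integral_Ioi_weibull_deriv_Suc:
  assumes a: "0 < a" "a \<le> 1" and c: "0 \<le> c" "0 < c \<or> j = 0"
  shows "(\<integral>\<^sup>+u. indicator {c<..} u * ennreal (weibull_deriv a (Suc j) u) \<partial>lborel) = ennreal (weibull_deriv a j c)"
proof -
  have deriv: "((\<lambda>u. - weibull_deriv a j u) has_real_derivative weibull_deriv a (Suc j) x) (at x)"
    if "ereal c < ereal x" for x
    using DERIV_minus[OF weibull_deriv_has_real_derivative[of x a j]] that c by simp
  have cont: "isCont (weibull_deriv a (Suc j)) x" if "ereal c < ereal x" for x
    using that c by (intro DERIV_isCont[OF weibull_deriv_has_real_derivative]) simp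
  have nonneg: "AE x in lborel. ereal c < ereal x \<longrightarrow> ereal x < \<infinity> \<longrightarrow> 0 \<le> weibull_deriv a (Suc j) x"
    using c a by (intro AE_I2) (auto intro!: weibull_deriv_nonneg)
  have lim_c: "(((\<lambda>u. - weibull_deriv a j u) \<circ> real_of_ereal) \<longlongrightarrow> - weibull_deriv a j c) (at_right (ereal c))"
    unfolding ereal_tendsto_simps using weibull_deriv_tendsto_at_right[OF a(1) c] by (rule tendsto_minus)
  have lim_inf: "(((\<lambda>u. - weibull_deriv a j u) \<circ> real_of_ereal) \<longlongrightarrow> 0) (at_left \<infinity>)"
    unfolding ereal_tendsto_simps using tendsto_minus[OF weibull_deriv_tendsto_0[OF a(1), of j]] by simp
  note FTC = interval_integral_FTC_nonneg[of c \<infinity>, OF _ deriv cont nonneg lim_c lim_inf, simplified]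
  have ioi: "einterval (ereal c) \<infinity> = {c<..}" by (auto simp: einterval_def)
  have "(\<integral>\<^sup>+u. indicator {c<..} u * ennreal (weibull_deriv a (Suc j) u) \<partial>lborel)
      = (\<integral>\<^sup>+u. ennreal (indicator {c<..} u *\<^sub>R weibull_deriv a (Suc j) u) \<partial>lborel)"
    by (intro nn_integral_cong) (auto split: split_indicator)
  also have "\<dots> = ennreal (integral\<^sup>L lborel (\<lambda>u. indicator {c<..} u *\<^sub>R weibull_deriv a (Suc j) u))"
    using FTC(1) c a unfolding ioi set_integrable_def
    by (intro nn_integral_eq_integral AE_I2) (auto split: split_indicator intro!: weibull_deriv_nonneg)
  finally show ?thesis
    using FTC(2) unfolding interval_lebesgue_integral_def ioi set_lebesgue_integral_def by simp
qed

lemma nn_integral_lborel_shift: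
  fixes K :: "real \<Rightarrow> ennreal"
  assumes [measurable]: "K \<in> borel_measurable borel"
  shows "(\<integral>\<^sup>+y. indicator {b<..} y * K (s + y) \<partial>lborel) = (\<integral>\<^sup>+u. indicator {s + b<..} u * K u \<partial>lborel)"
proof -
  have "(\<lambda>u. indicator {s + b<..} u * K u) \<in> borel_measurable borel" by measurable
  from nn_integral_real_affine[OF this, of 1 s]
  have "(\<integral>\<^sup>+u. indicator {s + b<..} u * K u \<partial>lborel) =
      (\<integral>\<^sup>+y. indicator {s + b<..} (s + y) * K (s + y) \<partial>lborel)" by simp
  also have "\<dots> = (\<integral>\<^sup>+y. indicator {b<..} y * K (s + y) \<partial>lborel)"
    by (auto intro!: nn_integral_cong split: split_indicator)
  finally show ?thesis ..
qed

lemma nn_integral_Ioi_weibull_deriv_Suc_shift: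
  assumes "0 < a" "a \<le> 1" "0 \<le> s + b" "0 < s + b \<or> j = 0"
  shows "(\<integral>\<^sup>+y. indicator {b<..} y * ennreal (weibull_deriv a (Suc j) (s + y)) \<partial>lborel) =
    ennreal (weibull_deriv a j (s + b))"
  using nn_integral_lborel_shift[of "\<lambda>u. ennreal (weibull_deriv a (Suc j) u)" b s]
    nn_integral_Ioi_weibull_deriv_Suc[OF assms] by simp

interpretation lborel_product: product_sigma_finite "\<lambda>_::nat. lborel::real measure"
  by (simp add: product_sigma_finite_def sigma_finite_lborel)

abbreviation PiM_lborel :: "nat \<Rightarrow> (nat \<Rightarrow> real) measure" where
  "PiM_lborel m \<equiv> PiM {..<m} (\<lambda>_. lborel)"

lemma nn_integral_PiM_lborel_Suc:
  assumes "f \<in> borel_measurable (PiM_lborel (Suc m))"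
  shows "(\<integral>\<^sup>+x. f x \<partial>PiM_lborel (Suc m)) = (\<integral>\<^sup>+x. (\<integral>\<^sup>+y. f (x(m := y)) \<partial>lborel) \<partial>PiM_lborel m)"
proof -
  have "{..<Suc m} = insert m {..<m}" by auto
  then show ?thesis using lborel_product.product_nn_integral_insert[of "{..<m}" m f] assms by simp
qed

lemma nn_integral_PiM_lborel_0: "(\<integral>\<^sup>+x. f x \<partial>PiM_lborel 0) = f (\<lambda>_. undefined)"
  by (simp add: PiM_empty nn_integral_count_space_finite)

lemma nn_integral_PiM_lborel_Suc_prod_sum:
  fixes g :: "nat \<Rightarrow> real \<Rightarrow> ennreal" and K :: "real \<Rightarrow> ennreal"
  assumes [measurable]: "\<And>i. g i \<in> borel_measurable borel" "K \<in> borel_measurable borel"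
  shows "(\<integral>\<^sup>+x. (\<Prod>i<Suc m. g i (x i)) * K (\<Sum>i<Suc m. x i) \<partial>PiM_lborel (Suc m)) =
    (\<integral>\<^sup>+x. (\<Prod>i<m. g i (x i)) * (\<integral>\<^sup>+y. g m y * K ((\<Sum>i<m. x i) + y) \<partial>lborel) \<partial>PiM_lborel m)"
proof -
  have upd: "(\<Prod>i<Suc m. g i ((x(m := y)) i)) * K (\<Sum>i<Suc m. (x(m := y)) i) =
      (\<Prod>i<m. g i (x i)) * (g m y * K ((\<Sum>i<m. x i) + y))" for x y
  proof -
    have "(\<Prod>i<m. g i ((x(m := y)) i)) = (\<Prod>i<m. g i (x i))" by (intro prod.cong) auto
    moreover have "(\<Sum>i<m. (x(m := y)) i) = (\<Sum>i<m. x i)" by (intro sum.cong) auto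
    ultimately show ?thesis by (simp add: ac_simps)
  qed
  have "(\<lambda>x. (\<Prod>i<Suc m. g i (x i)) * K (\<Sum>i<Suc m. x i)) \<in> borel_measurable (PiM_lborel (Suc m))"
    by measurable
  then show ?thesis
    by (simp only: nn_integral_PiM_lborel_Suc upd) (intro nn_integral_cong nn_integral_cmult, measurable)
qed

lemma nn_integral_orthant_weibull_deriv:
  assumes a: "0 < a" "a \<le> 1" and b: "\<And>i. 0 \<le> b i"
  assumes c: "0 \<le> c" "k = 0 \<or> 0 < c"
  shows "(\<integral>\<^sup>+x. (\<Prod>i<m. indicator {b i<..} (x i)) * ennreal (weibull_deriv a (k + m) (c + (\<Sum>i<m. x i))) \<partial>PiM_lborel m)
       = ennreal (weibull_deriv a k (c + (\<Sum>i<m. b i)))"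
  using c
proof (induction m arbitrary: c)
  case 0
  then show ?case by (simp only: nn_integral_PiM_lborel_0) simp
next
  case (Suc m)
  let ?I = "\<lambda>x. (\<Prod>i<m. indicator {b i<..} (x i)) :: ennreal"
  have inner: "?I x * (\<integral>\<^sup>+y. indicator {b m<..} y *
        ennreal (weibull_deriv a (k + Suc m) (c + ((\<Sum>i<m. x i) + y))) \<partial>lborel) =
      ?I x * ennreal (weibull_deriv a (k + m) ((c + b m) + (\<Sum>i<m. x i)))" for x
  proof (cases "\<forall>i<m. b i < x i")
    case True
    then have pos: "0 < x i" if "i < m" for i
      using b[of i] that by (meson le_less_trans)
    have "0 \<le> (\<Sum>i<m. x i)" using pos by (intro sum_nonneg) (simp add: less_imp_le)
    moreover have "0 < (\<Sum>i<m. x i) \<or> m = 0" using pos by (cases "m = 0") (auto intro!: sum_pos)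
    ultimately have "0 \<le> (c + (\<Sum>i<m. x i)) + b m" "0 < (c + (\<Sum>i<m. x i)) + b m \<or> k + m = 0"
      using Suc.prems b[of m] by auto
    from nn_integral_Ioi_weibull_deriv_Suc_shift[OF a this] show ?thesis
      by (simp add: ac_simps)
  next
    case False
    then obtain i where "i < m" "\<not> b i < x i" by auto
    then have "?I x = 0" by (intro prod_zero bexI[of _ i]) auto
    then show ?thesis by (simp only: mult_zero_left)
  qed
  have "(\<integral>\<^sup>+x. (\<Prod>i<Suc m. indicator {b i<..} (x i)) *
      ennreal (weibull_deriv a (k + Suc m) (c + (\<Sum>i<Suc m. x i))) \<partial>PiM_lborel (Suc m)) =
      (\<integral>\<^sup>+x. ?I x * (\<integral>\<^sup>+y. indicator {b m<..} y *
        ennreal (weibull_deriv a (k + Suc m) (c + ((\<Sum>i<m. x i) + y))) \<partial>lborel) \<partial>PiM_lborel m)"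
    by (rule nn_integral_PiM_lborel_Suc_prod_sum[where g = "\<lambda>i. indicator {b i<..}"
          and K = "\<lambda>s. ennreal (weibull_deriv a (k + Suc m) (c + s))"]) measurable
  also have "\<dots> = (\<integral>\<^sup>+x. ?I x * ennreal (weibull_deriv a (k + m) ((c + b m) + (\<Sum>i<m. x i))) \<partial>PiM_lborel m)"
    by (simp only: inner)
  also have "\<dots> = ennreal (weibull_deriv a k ((c + b m) + (\<Sum>i<m. b i)))"
    by (rule Suc.IH) (use Suc.prems b[of m] in auto)
  finally show ?case by (simp add: ac_simps)
qed

lemma nn_integral_power_div_fact_Ioo:
  "(\<integral>\<^sup>+s. indicator {0<..} s * ennreal (s ^ m / fact m) * indicator {..<u} s \<partial>lborel)
     = indicator {0<..} u * ennreal (u ^ Suc m / fact (Suc m))"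
proof (cases "u > 0")
  case True
  have "(\<integral>\<^sup>+s. indicator {0<..} s * ennreal (s ^ m / fact m) * indicator {..<u} s \<partial>lborel)
      = (\<integral>\<^sup>+s. ennreal (s ^ m / fact m) * indicator {0..u} s \<partial>lborel)"
    using AE_lborel_singleton[of 0] AE_lborel_singleton[of u]
    by (intro nn_integral_cong_AE) (auto split: split_indicator)
  also have "\<dots> = ennreal (u ^ Suc m / fact (Suc m) - 0 ^ Suc m / fact (Suc m))"
  proof (rule nn_integral_FTC_Icc)
    fix x :: real
    have "((\<lambda>s. s ^ Suc m) has_real_derivative real (Suc m) * x ^ m) (at x)"
      using DERIV_pow[of "Suc m" x] by simp
    from DERIV_cdivide[OF this, of "fact (Suc m)"]
    have "((\<lambda>s. s ^ Suc m / fact (Suc m)) has_real_derivative real (Suc m) * x ^ m / fact (Suc m)) (at x)" .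
    moreover have "real (Suc m) * x ^ m / fact (Suc m) = x ^ m / fact m"
      by (simp only: fact_Suc of_nat_mult mult_divide_mult_cancel_left_if) simp
    ultimately show "((\<lambda>s. s ^ Suc m / fact (Suc m)) has_real_derivative x ^ m / fact m) (at x)"
      by simp
  qed (use True in auto)
  finally show ?thesis using True by simp
next
  case False
  then have "(\<lambda>s. indicator {0<..} s * ennreal (s ^ m / fact m) * indicator {..<u} s) = (\<lambda>_. 0)"
    by (auto simp: fun_eq_iff split: split_indicator)
  then show ?thesis using False by simp
qed

lemma pred_fst_greaterThan_snd[measurable]:
  "Measurable.pred (borel \<Otimes>\<^sub>M borel) (\<lambda>x::real \<times> real. fst x \<in> {snd x<..})"
  by (simp add: greaterThan_iff) measurable

lemma nn_integral_convolve_power_div_fact: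
  fixes K :: "real \<Rightarrow> ennreal"
  assumes [measurable]: "K \<in> borel_measurable borel"
  shows "(\<integral>\<^sup>+s. indicator {0<..} s * ennreal (s ^ m / fact m) *
            (\<integral>\<^sup>+y. indicator {0<..} y * K (s + y) \<partial>lborel) \<partial>lborel)
       = (\<integral>\<^sup>+u. indicator {0<..} u * ennreal (u ^ Suc m / fact (Suc m)) * K u \<partial>lborel)"
proof -
  have [measurable]: "K \<in> borel_measurable lborel" by simp
  define g where "g s u = indicator {0<..} s * ennreal (s ^ m / fact m) * (indicator {s<..} u * K u)"
    for s u :: real
  have "case_prod (\<lambda>x y. g y x) \<in> borel_measurable (lborel \<Otimes>\<^sub>M lborel)"
    unfolding g_def by measurable
  note Fubini = lborel_pair.Fubini'[OF this]
  have "(\<integral>\<^sup>+s. indicator {0<..} s * ennreal (s ^ m / fact m) *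
            (\<integral>\<^sup>+y. indicator {0<..} y * K (s + y) \<partial>lborel) \<partial>lborel)
      = (\<integral>\<^sup>+s. (\<integral>\<^sup>+u. g s u \<partial>lborel) \<partial>lborel)"
    by (simp add: nn_integral_lborel_shift g_def nn_integral_cmult)
  also have "\<dots> = (\<integral>\<^sup>+u. (\<integral>\<^sup>+s. g s u \<partial>lborel) \<partial>lborel)"
    using Fubini by simp
  also have "\<dots> = (\<integral>\<^sup>+u. K u * (\<integral>\<^sup>+s. indicator {0<..} s * ennreal (s ^ m / fact m) *
      indicator {..<u} s \<partial>lborel) \<partial>lborel)"
    unfolding g_def
    by (subst nn_integral_cmult[symmetric]) (auto intro!: nn_integral_cong simp: ac_simps split: split_indicator)
  also have "\<dots> = (\<integral>\<^sup>+u. indicator {0<..} u * ennreal (u ^ Suc m / fact (Suc m)) * K u \<partial>lborel)"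
    unfolding nn_integral_power_div_fact_Ioo by (simp add: ac_simps)
  finally show ?thesis .
qed

lemma nn_integral_PiM_lborel_positive_sum:
  fixes K :: "real \<Rightarrow> ennreal"
  assumes "K \<in> borel_measurable borel"
  shows "(\<integral>\<^sup>+x. (\<Prod>i<Suc m. indicator {0<..} (x i)) * K (\<Sum>i<Suc m. x i) \<partial>PiM_lborel (Suc m))
       = (\<integral>\<^sup>+s. indicator {0<..} s * ennreal (s ^ m / fact m) * K s \<partial>lborel)"
  using assms
proof (induction m arbitrary: K)
  case 0
  then have "(\<integral>\<^sup>+x. (\<Prod>i<Suc 0. indicator {0<..} (x i)) * K (\<Sum>i<Suc 0. x i) \<partial>PiM_lborel (Suc 0)) =
      (\<integral>\<^sup>+x. (\<Prod>i<0. indicator {0<..} (x i)) * (\<integral>\<^sup>+y. indicator {0<..} y * K ((\<Sum>i<0. x i) + y) \<partial>lborel)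
        \<partial>PiM_lborel 0)"
    by (intro nn_integral_PiM_lborel_Suc_prod_sum) simp_all
  then show ?case by (simp only: nn_integral_PiM_lborel_0) simp
next
  case (Suc m)
  note [measurable] = Suc.prems
  define K' where "K' s = (\<integral>\<^sup>+y. indicator {0<..} y * K (s + y) \<partial>lborel)" for s
  have "case_prod (\<lambda>s y. indicator {0<..} y * K (s + y)) \<in> borel_measurable (borel \<Otimes>\<^sub>M lborel)"
    by measurable
  then have K'[measurable]: "K' \<in> borel_measurable borel"
    unfolding K'_def by (rule lborel.borel_measurable_nn_integral)
  have "(\<integral>\<^sup>+x. (\<Prod>i<Suc (Suc m). indicator {0<..} (x i)) * K (\<Sum>i<Suc (Suc m). x i) \<partial>PiM_lborel (Suc (Suc m)))
      = (\<integral>\<^sup>+x. (\<Prod>i<Suc m. indicator {0<..} (x i)) * K' (\<Sum>i<Suc m. x i) \<partial>PiM_lborel (Suc m))"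
    unfolding K'_def by (rule nn_integral_PiM_lborel_Suc_prod_sum) measurable
  also have "\<dots> = (\<integral>\<^sup>+s. indicator {0<..} s * ennreal (s ^ m / fact m) * K' s \<partial>lborel)"
    by (rule Suc.IH) measurable
  also have "\<dots> = (\<integral>\<^sup>+u. indicator {0<..} u * ennreal (u ^ Suc m / fact (Suc m)) * K u \<partial>lborel)"
    unfolding K'_def by (rule nn_integral_convolve_power_div_fact) measurable
  finally show ?case .
qed

definition upper_orthant :: "nat \<Rightarrow> (nat \<Rightarrow> real) \<Rightarrow> (nat \<Rightarrow> real) set" where
  "upper_orthant n c = {x \<in> space (PiM_lborel n). \<forall>i<n. c i < x i}"

lemma sets_PiM_lborel_upper_orthants:
  "sets (PiM_lborel n) = sigma_sets (space (PiM_lborel n)) (range (upper_orthant n))"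
proof -
  let ?\<Omega> = "PiE {..<n} (\<lambda>_. UNIV::real set)"
  have space: "space (PiM_lborel n) = ?\<Omega>" by (simp add: space_PiM)
  have cover: "\<exists>S\<subseteq>range greaterThan. countable S \<and> (UNIV::real set) = \<Union>S"
  proof (intro exI conjI)
    show "(UNIV::real set) = \<Union>(range (\<lambda>j::nat. {- real j <..}))"
      using reals_Archimedean2 by (auto simp: minus_less_iff)
  qed auto
  have "sets (PiM_lborel n) = sets (PiM {..<n} (\<lambda>_. sigma (UNIV::real set) (range greaterThan)))"
    by (rule sets_PiM_cong) (simp_all add: borel_Ioi[symmetric])
  also have "\<dots> = sets (sigma ?\<Omega>
      {{f \<in> ?\<Omega>. \<forall>i\<in>J. f i \<in> A i} | A J. J \<in> {{..<n}} \<and> A \<in> Pi J (\<lambda>_. range greaterThan)})"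
    by (rule sets_PiM_sigma) (use cover in auto)
  also have "{{f \<in> ?\<Omega>. \<forall>i\<in>J. f i \<in> A i} | A J. J \<in> {{..<n}} \<and> A \<in> Pi J (\<lambda>_. range greaterThan)}
      = range (upper_orthant n)"
  proof (intro set_eqI iffI)
    fix S assume "S \<in> {{f \<in> ?\<Omega>. \<forall>i\<in>J. f i \<in> A i} | A J. J \<in> {{..<n}} \<and> A \<in> Pi J (\<lambda>_. range greaterThan)}"
    then obtain A where A: "A \<in> Pi {..<n} (\<lambda>_. range greaterThan)" and S: "S = {f \<in> ?\<Omega>. \<forall>i<n. f i \<in> A i}"
      by auto
    have "\<forall>i\<in>{..<n}. \<exists>c. A i = {c<..}" using A by auto
    then obtain c where "\<And>i. i < n \<Longrightarrow> A i = {c i<..}" by (metis lessThan_iff)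
    then have "S = upper_orthant n c" by (auto simp: S upper_orthant_def space)
    then show "S \<in> range (upper_orthant n)" by blast
  next
    fix S assume "S \<in> range (upper_orthant n)"
    then obtain c where "S = {f \<in> ?\<Omega>. \<forall>i\<in>{..<n}. f i \<in> {c i<..}}"
      by (auto simp: upper_orthant_def space)
    then show "S \<in> {{f \<in> ?\<Omega>. \<forall>i\<in>J. f i \<in> A i} | A J. J \<in> {{..<n}} \<and> A \<in> Pi J (\<lambda>_. range greaterThan)}"
      by (intro CollectI exI[of _ "\<lambda>i. {c i<..}"] exI[of _ "{..<n}"]) auto
  qed
  finally have "sets (PiM_lborel n) = sets (sigma ?\<Omega> (range (upper_orthant n)))" .
  moreover have "range (upper_orthant n) \<subseteq> Pow ?\<Omega>" by (auto simp: upper_orthant_def space)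
  ultimately show ?thesis by (simp add: space)
qed

lemma measure_eqI_upper_orthants:
  assumes sets: "sets N = sets (PiM_lborel n)" "sets N' = sets (PiM_lborel n)"
    and "finite_measure N"
    and eq: "\<And>c. emeasure N (upper_orthant n c) = emeasure N' (upper_orthant n c)"
  shows "N = N'"
proof (rule measure_eqI_generator_eq[where E = "range (upper_orthant n)" and \<Omega> = "space (PiM_lborel n)"
      and A = "\<lambda>j. upper_orthant n (\<lambda>_. - real j)"])
  show "Int_stable (range (upper_orthant n))"
  proof (rule Int_stableI, safe)
    fix c d
    have "upper_orthant n c \<inter> upper_orthant n d = upper_orthant n (\<lambda>i. max (c i) (d i))"
      by (auto simp: upper_orthant_def)
    then show "upper_orthant n c \<inter> upper_orthant n d \<in> range (upper_orthant n)" by blast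
  qed
  show "(\<Union>j. upper_orthant n (\<lambda>_. - real j)) = space (PiM_lborel n)"
  proof safe
    fix x assume x: "x \<in> space (PiM_lborel n)"
    obtain j :: nat where j: "(\<Sum>i<n. \<bar>x i\<bar>) < real j" using reals_Archimedean2 by blast
    have "\<bar>x i\<bar> \<le> (\<Sum>i<n. \<bar>x i\<bar>)" if "i < n" for i
      using that by (intro member_le_sum) auto
    then have "x \<in> upper_orthant n (\<lambda>_. - real j)" using x j by (force simp: upper_orthant_def)
    then show "x \<in> (\<Union>j. upper_orthant n (\<lambda>_. - real j))" by blast
  qed (auto simp: upper_orthant_def)
  show "emeasure N (upper_orthant n (\<lambda>_. - real j)) \<noteq> \<infinity>" for j
    using \<open>finite_measure N\<close> by (simp add: finite_measure.emeasure_finite)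
qed (use sets eq in \<open>auto simp: sets_PiM_lborel_upper_orthants upper_orthant_def\<close>)

lemma emeasure_weibull_density_upper_orthant:
  assumes "0 < a" "a \<le> 1"
  shows "emeasure (density (PiM_lborel n)
      (\<lambda>x. (\<Prod>i<n. indicator {0<..} (x i)) * ennreal (weibull_deriv a n (\<Sum>i<n. x i)))) (upper_orthant n c)
    = ennreal (exp (- ((\<Sum>i<n. max (c i) 0) powr a)))"
proof -
  have orthant: "upper_orthant n c \<in> sets (PiM_lborel n)" by (simp add: sets_PiM_lborel_upper_orthants)
  have "emeasure (density (PiM_lborel n)
      (\<lambda>x. (\<Prod>i<n. indicator {0<..} (x i)) * ennreal (weibull_deriv a n (\<Sum>i<n. x i)))) (upper_orthant n c)
    = (\<integral>\<^sup>+x. (\<Prod>i<n. indicator {0<..} (x i)) * ennreal (weibull_deriv a n (\<Sum>i<n. x i)) *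
        indicator (upper_orthant n c) x \<partial>PiM_lborel n)"
    by (rule emeasure_density[OF _ orthant]) measurable
  also have "\<dots> = (\<integral>\<^sup>+x. (\<Prod>i<n. indicator {max (c i) 0<..} (x i)) *
      ennreal (weibull_deriv a (0 + n) (0 + (\<Sum>i<n. x i))) \<partial>PiM_lborel n)"
  proof (rule nn_integral_cong)
    fix x assume "x \<in> space (PiM_lborel n)"
    then have "indicator (upper_orthant n c) x = (\<Prod>i<n. indicator {c i<..} (x i) :: ennreal)"
      by (simp add: upper_orthant_def indicator_def prod.neutral_const split: if_split) (auto intro: prod_zero)
    moreover have "indicator {0<..} t * indicator {c i<..} t = (indicator {max (c i) 0<..} t :: ennreal)" for i t
      by (simp split: split_indicator)
    ultimately show "(\<Prod>i<n. indicator {0<..} (x i)) * ennreal (weibull_deriv a n (\<Sum>i<n. x i)) *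
        indicator (upper_orthant n c) x = (\<Prod>i<n. indicator {max (c i) 0<..} (x i)) *
        ennreal (weibull_deriv a (0 + n) (0 + (\<Sum>i<n. x i)))"
      by (simp add: ac_simps flip: prod.distrib)
  qed
  also have "\<dots> = ennreal (weibull_deriv a 0 (0 + (\<Sum>i<n. max (c i) 0)))"
    by (rule nn_integral_orthant_weibull_deriv) (use assms in auto)
  finally show ?thesis by (simp add: weibull_deriv_def)
qed

lemma (in prob_space) prob_upper_orthant_eq_max_0:
  fixes X :: "nat \<Rightarrow> 'a \<Rightarrow> real"
  assumes X: "\<And>i. i < n \<Longrightarrow> X i \<in> borel_measurable M"
    and surv: "\<And>x. (\<forall>i<n. 0 \<le> x i) \<Longrightarrow> prob {\<omega> \<in> space M. \<forall>i<n. x i < X i \<omega>} = S x"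
    and "S (\<lambda>_. 0) = 1"
  shows "prob {\<omega> \<in> space M. \<forall>i<n. c i < X i \<omega>} = S (\<lambda>i. max (c i) 0)"
proof -
  have event: "{\<omega> \<in> space M. \<forall>i<n. d i < X i \<omega>} \<in> events" for d
  proof -
    have "{\<omega> \<in> space M. \<forall>i\<in>{..<n}. d i < X i \<omega>} \<in> events"
    proof (rule sets.sets_Collect_finite_All)
      fix i assume "i \<in> {..<n}"
      then have "X i -` {d i<..} \<inter> space M \<in> events" using X by (intro measurable_sets) auto
      moreover have "X i -` {d i<..} \<inter> space M = {\<omega> \<in> space M. d i < X i \<omega>}" by auto
      ultimately show "{\<omega> \<in> space M. d i < X i \<omega>} \<in> events" by simp
    qed simp
    then show ?thesis by (simp only: lessThan_iff Ball_def)
  qed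
  define A where "A d = {\<omega> \<in> space M. \<forall>i<n. d i < X i \<omega>}" for d
  define b where "b = (\<lambda>i. max (c i) 0)"
  have events: "A d \<in> events" for d unfolding A_def by (rule event)
  \<comment> \<open>the \<open>X i\<close> are almost surely positive\<close>
  have null: "prob (space M - A (\<lambda>_. 0)) = 0"
    using prob_compl[OF events] surv[of "\<lambda>_. 0"] \<open>S (\<lambda>_. 0) = 1\<close> by (simp add: A_def)
  have "prob (A b) \<le> prob (A c)"
    by (rule finite_measure_mono) (auto simp: A_def b_def event)
  moreover have "A c \<subseteq> A b \<union> (space M - A (\<lambda>_. 0))"
  proof
    fix \<omega> assume "\<omega> \<in> A c"
    then show "\<omega> \<in> A b \<union> (space M - A (\<lambda>_. 0))"
      by (cases "\<omega> \<in> A (\<lambda>_. 0)") (auto simp: A_def b_def)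
  qed
  then have "prob (A c) \<le> prob (A b \<union> (space M - A (\<lambda>_. 0)))"
    by (rule finite_measure_mono) (intro sets.Un sets.Diff events sets.top)
  moreover have "\<dots> \<le> prob (A b) + prob (space M - A (\<lambda>_. 0))"
    by (rule measure_Un_le) (intro sets.Diff events sets.top)+
  ultimately have "prob (A c) = prob (A b)" using null by linarith
  also have "prob (A b) = S b" using surv[of b] by (simp add: A_def b_def)
  finally show ?thesis by (simp add: A_def b_def)
qed

lemma distr_sum_density_PiM_lborel:
  assumes [measurable]: "f \<in> borel_measurable borel"
  shows "distr (density (PiM_lborel (Suc m)) (\<lambda>x. (\<Prod>i<Suc m. indicator {0<..} (x i)) * f (\<Sum>i<Suc m. x i)))
      lborel (\<lambda>x. \<Sum>i<Suc m. x i)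
    = density lborel (\<lambda>s. indicator {0<..} s * ennreal (s ^ m / fact m) * f s)"
proof (rule measure_eqI)
  let ?H = "\<lambda>x. (\<Prod>i<Suc m. indicator {0<..} (x i)) * f (\<Sum>i<Suc m. x i)"
  let ?sum = "\<lambda>x. \<Sum>i<Suc m. x i"
  fix B assume "B \<in> sets (distr (density (PiM_lborel (Suc m)) ?H) lborel ?sum)"
  then have [measurable]: "B \<in> sets borel" by simp
  have "emeasure (distr (density (PiM_lborel (Suc m)) ?H) lborel ?sum) B
      = emeasure (density (PiM_lborel (Suc m)) ?H) (?sum -` B \<inter> space (PiM_lborel (Suc m)))"
    by (subst emeasure_distr) simp_all
  also have "\<dots> = (\<integral>\<^sup>+x. ?H x * indicator (?sum -` B \<inter> space (PiM_lborel (Suc m))) x \<partial>PiM_lborel (Suc m))"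
    by (rule emeasure_density) simp_all
  also have "\<dots> = (\<integral>\<^sup>+x. (\<Prod>i<Suc m. indicator {0<..} (x i)) * (\<lambda>s. f s * indicator B s) (\<Sum>i<Suc m. x i)
        \<partial>PiM_lborel (Suc m))"
    by (intro nn_integral_cong) (simp add: ac_simps split: split_indicator)
  also have "\<dots> = (\<integral>\<^sup>+s. indicator {0<..} s * ennreal (s ^ m / fact m) * (f s * indicator B s) \<partial>lborel)"
    by (rule nn_integral_PiM_lborel_positive_sum) measurable
  also have "\<dots> = emeasure (density lborel (\<lambda>s. indicator {0<..} s * ennreal (s ^ m / fact m) * f s)) B"
    by (simp add: emeasure_density ac_simps)
  finally show "emeasure (distr (density (PiM_lborel (Suc m)) ?H) lborel ?sum) B
    = emeasure (density lborel (\<lambda>s. indicator {0<..} s * ennreal (s ^ m / fact m) * f s)) B" .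
qed simp

lemma weibull_deriv_eq_sum_bell_partial:
  assumes "0 < y" "1 \<le> n"
  shows "weibull_deriv a n y = (\<Sum>k=1..n. (-1) ^ (n + k) * exp (- (y powr a)) *
      bell_partial n k (\<lambda>j. falling_fact a j * y powr (a - real j)))"
proof -
  have "(\<lambda>j. falling_fact a j * y powr (a - real j)) = (\<lambda>j. y powr a * (1 / y) ^ j * falling_fact a j)"
    using assms(1) by (simp add: fun_eq_iff powr_diff powr_realpow power_one_over)
  moreover have "(y powr a) ^ k * (1 / y) ^ n = y powr (real k * a - real n)" for k
  proof -
    have "(y powr a) ^ k = y powr (real k * a)"
      using assms(1) by (simp add: powr_realpow[symmetric] powr_powr mult.commute)
    moreover have "(1 / y) ^ n = y powr (- real n)"
      using assms(1) by (simp add: powr_minus powr_realpow power_one_over divide_inverse power_inverse)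
    ultimately show ?thesis using assms(1) by (simp add: powr_add[symmetric])
  qed
  ultimately have bell: "bell_partial n k (\<lambda>j. falling_fact a j * y powr (a - real j)) =
      bell_partial n k (falling_fact a) * y powr (real k * a - real n)" for k
    by (simp add: bell_partial_scale)
  have "bell_partial n 0 (falling_fact a) = 0" using assms(2) by (simp add: bell_partial_eq_fps_nth)
  then have "weibull_deriv_poly a n y =
      (\<Sum>k=1..n. (-1) ^ (n + k) * bell_partial n k (falling_fact a) * y powr (real k * a - real n))"
    by (simp add: weibull_deriv_poly_def atMost_atLeast0 sum.atLeast_Suc_atMost)
  then show ?thesis
    using assms by (simp add: weibull_deriv_pos bell sum_distrib_left ac_simps)
qed

lemma (in prob_space) distr_restrict_eq_weibull_density:
  fixes X :: "nat \<Rightarrow> 'a \<Rightarrow> real"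
  assumes "0 < \<alpha>" "\<alpha> \<le> 1" and X: "\<And>i. i < n \<Longrightarrow> X i \<in> borel_measurable M"
    and surv: "\<And>x. (\<forall>i<n. 0 \<le> x i) \<Longrightarrow>
      prob {\<omega> \<in> space M. \<forall>i<n. x i < X i \<omega>} = exp (- ((\<Sum>i<n. x i) powr \<alpha>))"
  shows "distr M (PiM_lborel n) (\<lambda>\<omega>. \<lambda>i\<in>{..<n}. X i \<omega>) =
    density (PiM_lborel n) (\<lambda>x. (\<Prod>i<n. indicator {0<..} (x i)) * ennreal (weibull_deriv \<alpha> n (\<Sum>i<n. x i)))"
proof (rule measure_eqI_upper_orthants)
  have "(\<lambda>\<omega>. \<lambda>i\<in>{..<n}. X i \<omega>) \<in> measurable M (PiM_lborel n)"
    by (rule measurable_restrict) (use X in auto)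
  then show "finite_measure (distr M (PiM_lborel n) (\<lambda>\<omega>. \<lambda>i\<in>{..<n}. X i \<omega>))"
    by (simp add: finite_measure_distr)
  fix c
  have "(\<lambda>\<omega>. \<lambda>i\<in>{..<n}. X i \<omega>) -` upper_orthant n c \<inter> space M = {\<omega> \<in> space M. \<forall>i<n. c i < X i \<omega>}"
    by (auto simp: upper_orthant_def space_PiM)
  with \<open>_ \<in> measurable M (PiM_lborel n)\<close>
  have "emeasure (distr M (PiM_lborel n) (\<lambda>\<omega>. \<lambda>i\<in>{..<n}. X i \<omega>)) (upper_orthant n c)
      = ennreal (exp (- ((\<Sum>i<n. max (c i) 0) powr \<alpha>)))"
    using prob_upper_orthant_eq_max_0[where S = "\<lambda>x. exp (- ((\<Sum>i<n. x i) powr \<alpha>))", OF X surv]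
    by (simp add: emeasure_distr sets_PiM_lborel_upper_orthants emeasure_eq_measure)
  then show "emeasure (distr M (PiM_lborel n) (\<lambda>\<omega>. \<lambda>i\<in>{..<n}. X i \<omega>)) (upper_orthant n c) =
      emeasure (density (PiM_lborel n)
        (\<lambda>x. (\<Prod>i<n. indicator {0<..} (x i)) * ennreal (weibull_deriv \<alpha> n (\<Sum>i<n. x i)))) (upper_orthant n c)"
    using emeasure_weibull_density_upper_orthant[OF assms(1,2)] by simp
qed simp_all

lemma weibull_sum_density_eq_bell_partial:
  assumes "0 < \<alpha>" "\<alpha> \<le> 1" "n = Suc m"
  shows "(\<lambda>s. indicator {0<..} s * ennreal (s ^ m / fact m) * ennreal (weibull_deriv \<alpha> n s)) =
    (\<lambda>x. ennreal (if x > 0 then x ^ (n - 1) / Gamma (real n) *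
      (\<Sum>k=1..n. (-1) ^ (n + k) * exp (- (x powr \<alpha>)) *
        bell_partial n k (\<lambda>j. falling_fact \<alpha> j * x powr (\<alpha> - real j))) else 0))"
proof
  fix x :: real
  show "indicator {0<..} x * ennreal (x ^ m / fact m) * ennreal (weibull_deriv \<alpha> n x) =
    ennreal (if x > 0 then x ^ (n - 1) / Gamma (real n) *
      (\<Sum>k=1..n. (-1) ^ (n + k) * exp (- (x powr \<alpha>)) *
        bell_partial n k (\<lambda>j. falling_fact \<alpha> j * x powr (\<alpha> - real j))) else 0)"
  proof (cases "x > 0")
    case True
    have "Gamma (real n) = fact m" "n - 1 = m" "1 \<le> n" using Gamma_fact[of m] by (simp_all add: assms(3) add.commute)
    then have "x ^ (n - 1) / Gamma (real n) * (\<Sum>k=1..n. (-1) ^ (n + k) * exp (- (x powr \<alpha>)) *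
        bell_partial n k (\<lambda>j. falling_fact \<alpha> j * x powr (\<alpha> - real j)))
      = x ^ m / fact m * weibull_deriv \<alpha> n x"
      by (simp only: weibull_deriv_eq_sum_bell_partial[OF True])
    then show ?thesis
      using True ennreal_mult''[OF weibull_deriv_nonneg[OF assms(1,2) True], of "x ^ m / fact m" n] by simp
  qed simp
qed

theorem theorem8:
  fixes M :: "'a measure" and X :: "nat \<Rightarrow> 'a \<Rightarrow> real" and n :: nat and \<alpha> :: real
  assumes "prob_space M"
    and "0 < \<alpha>" and "\<alpha> \<le> 1"
    and "n \<ge> 1"
    and "\<And>i. i < n \<Longrightarrow> X i \<in> borel_measurable M"
    and "\<And>x :: nat \<Rightarrow> real. (\<forall>i<n. x i \<ge> 0) \<Longrightarrow>
           measure M {\<omega> \<in> space M. \<forall>i<n. X i \<omega> > x i} = exp (- ((\<Sum>i<n. x i) powr \<alpha>))"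
  shows "distributed M lborel (\<lambda>\<omega>. \<Sum>i<n. X i \<omega>)
           (\<lambda>x. ennreal (if x > 0 then
              x ^ (n - 1) / Gamma (real n) *
              (\<Sum>k=1..n. (-1) ^ (n + k) * exp (- (x powr \<alpha>)) *
                 bell_partial n k (\<lambda>j. falling_fact \<alpha> j * x powr (\<alpha> - real j)))
            else 0))"
proof -
  interpret prob_space M by fact
  obtain m where n: "n = Suc m" using \<open>n \<ge> 1\<close> by (cases n) auto
  have [measurable]: "(\<lambda>\<omega>. \<lambda>i\<in>{..<n}. X i \<omega>) \<in> measurable M (PiM_lborel n)"
    by (rule measurable_restrict) (use assms(5) in auto)
  have "distr M lborel (\<lambda>\<omega>. \<Sum>i<n. X i \<omega>) =
      distr (distr M (PiM_lborel n) (\<lambda>\<omega>. \<lambda>i\<in>{..<n}. X i \<omega>)) lborel (\<lambda>x. \<Sum>i<n. x i)"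
    by (subst distr_distr) (auto intro!: distr_cong)
  also have "\<dots> = distr (density (PiM_lborel n)
      (\<lambda>x. (\<Prod>i<n. indicator {0<..} (x i)) * ennreal (weibull_deriv \<alpha> n (\<Sum>i<n. x i)))) lborel (\<lambda>x. \<Sum>i<n. x i)"
    using distr_restrict_eq_weibull_density[OF assms(2,3,5,6)] by simp
  also have "\<dots> = density lborel
      (\<lambda>s. indicator {0<..} s * ennreal (s ^ m / fact m) * ennreal (weibull_deriv \<alpha> n s))"
    unfolding n by (rule distr_sum_density_PiM_lborel) measurable
  finally show ?thesis
    unfolding distributed_def weibull_sum_density_eq_bell_partial[OF assms(2,3) n, symmetric]
    using assms(5) by auto
qed

end
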